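(* Let $\rho:\mathbb{N}\to\mathbb{R}$ and $\beta>0$ be such that $\rho(t)=\mathcal{O}(e^{-\beta t})$, i.e. $|\rho(t)|\le c\,e^{-\beta t}$ for some $c>0$ and all $t\in\mathbb{N}$. Then for every $n\in\{1,\dots,\lfloor99\beta\rfloor\}$ there exists a constant $C(n)$ (depending on $n$, $\beta$ and $c$ but not on $m$) such that for every $m\in\mathbb{N}_+$ there is a function $\phi(t)=\sum_{k=1}^m\alpha_ke^{-\beta_kt}$ with $\beta_k>0$ for all $k\in[m]$ and $$\sum_{t=0}^\infty|\rho(t)-\phi(t)|\le\frac{C(n)}{m^n}.$$
   Context: $\mathbb{N}=\{0,1,2,\dots\}$; $[m]=\{1,\dots,m\}$. *)

theory Defs
  imports "HOL-Analysis.Analysis"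
begin

end

theory Submission
  imports Defs
begin

text \<open>By induction on \<open>m\<close>, an exponential sum with \<open>m\<close> terms can match the first \<open>m\<close> values
  of \<open>\<rho>\<close> exactly while its remaining \<open>\<ell>\<^sup>1\<close> error is as small as desired: the approximant of the
  shifted sequence \<open>\<rho> (t + 1)\<close> is shifted back by multiplying each coefficient by \<open>exp (b k)\<close>, and
  one more term \<open>d y\<^sup>t\<close> with \<open>y\<close> tiny fixes the value at \<open>0\<close> at negligible cost. What remains is
  the tail \<open>\<Sum>t\<ge>m. \<bar>\<rho> t\<bar>\<close>, which is \<open>O(exp (- \<beta> m))\<close>, and \<open>exp (- \<beta> m) \<le> n! / (\<beta> m) ^ n\<close> for
  every \<open>n\<close>.\<close>

definition exp_sum :: "(nat \<Rightarrow> real) \<Rightarrow> (nat \<Rightarrow> real) \<Rightarrow> nat \<Rightarrow> nat \<Rightarrow> real" where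
  "exp_sum \<alpha> b N t = (\<Sum>k=1..N. \<alpha> k * exp (- b k * real t))"

lemma exp_neg_mult_of_nat: "exp (- (b * real t)) = exp (- b) ^ t"
  using exp_of_nat_mult[of t "- b"] by (simp add: mult.commute)

lemma power_div_fact_le_exp:
  fixes x :: real
  assumes "x \<ge> 0"
  shows "x ^ n / fact n \<le> exp x"
proof -
  have "summable (\<lambda>k. x ^ k / fact k)"
    using summable_exp[of x] by (simp add: divide_inverse mult.commute)
  then have "x ^ n / fact n \<le> (\<Sum>k. x ^ k / fact k)"
    using assms by (auto dest: sum_le_suminf[of _ "{n}"])
  also have "\<dots> = exp x"
    by (simp add: exp_def divide_inverse mult.commute scaleR_conv_of_real)
  finally show ?thesis .
qed

lemma exp_neg_mult_power_le:
  fixes \<beta> x :: real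
  assumes "\<beta> > 0" "x \<ge> 0"
  shows "exp (- \<beta> * x) * x ^ n \<le> fact n / \<beta> ^ n"
proof -
  have "(\<beta> * x) ^ n / fact n \<le> exp (\<beta> * x)"
    using assms by (intro power_div_fact_le_exp) simp
  then have "\<beta> ^ n * x ^ n \<le> fact n * exp (\<beta> * x)"
    by (simp add: field_simps power_mult_distrib)
  then show ?thesis
    using assms by (simp add: exp_minus field_simps)
qed

lemma exp_sum_prepend:
  assumes "\<forall>k\<in>{1..N}. b k > 0" "\<epsilon> > 0"
  obtains \<alpha>' b' where "\<forall>k\<in>{1..Suc N}. b' k > 0" "exp_sum \<alpha>' b' (Suc N) 0 = x\<^sub>0"
    "summable (\<lambda>t. \<bar>exp_sum \<alpha>' b' (Suc N) (Suc t) - exp_sum \<alpha> b N t\<bar>)"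
    "(\<Sum>t. \<bar>exp_sum \<alpha>' b' (Suc N) (Suc t) - exp_sum \<alpha> b N t\<bar>) \<le> \<epsilon>"
proof -
  define d where "d = x\<^sub>0 - (\<Sum>k=1..N. \<alpha> k * exp (b k))"
  define y where "y = min (1/2) (\<epsilon> / (2 * (\<bar>d\<bar> + 1)))"
  have y: "0 < y" "y \<le> 1/2"
    using assms(2) unfolding y_def by (auto simp: min_def zero_less_divide_iff add_pos_nonneg)
  have y_eps: "y * (2 * (\<bar>d\<bar> + 1)) \<le> \<epsilon>"
  proof -
    have "y \<le> \<epsilon> / (2 * (\<bar>d\<bar> + 1))"
      unfolding y_def by (rule min.cobounded2)
    moreover have "0 < 2 * (\<bar>d\<bar> + 1)"
      by (simp add: add_nonneg_pos)
    ultimately show ?thesis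
      by (simp only: pos_le_divide_eq)
  qed
  define \<alpha>' where "\<alpha>' k = (if k = Suc N then d else \<alpha> k * exp (b k))" for k
  define b' where "b' k = (if k = Suc N then - ln y else b k)" for k
  have shift: "\<alpha> k * exp (b k) * exp (- b k * real (Suc t)) = \<alpha> k * exp (- b k * real t)"
    for k t by (simp add: mult.assoc exp_add[symmetric] algebra_simps)
  have y_pow: "exp (ln y * real t) = y ^ t" for t
    using exp_of_nat_mult[of t "ln y"] y by (simp add: mult.commute)
  have exp_sum': "exp_sum \<alpha>' b' (Suc N) t
      = (\<Sum>k=1..N. \<alpha> k * exp (b k) * exp (- b k * real t)) + d * y ^ t" for t
    by (simp add: exp_sum_def \<alpha>'_def b'_def y_pow)
  have "exp_sum \<alpha>' b' (Suc N) (Suc t) = exp_sum \<alpha> b N t + d * y * y ^ t" for t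
    unfolding exp_sum' shift by (simp add: exp_sum_def)
  then have err: "\<bar>exp_sum \<alpha>' b' (Suc N) (Suc t) - exp_sum \<alpha> b N t\<bar> = \<bar>d\<bar> * y * y ^ t" for t
    using y by (simp add: abs_mult)
  have "(\<lambda>t. \<bar>d\<bar> * y * y ^ t) sums (\<bar>d\<bar> * y * (1 / (1 - y)))"
    using y by (intro sums_mult geometric_sums) simp
  moreover have "\<bar>d\<bar> * y * (1 / (1 - y)) \<le> \<epsilon>"
  proof -
    have "\<bar>d\<bar> * y * (1 / (1 - y)) = \<bar>d\<bar> * (y / (1 - y))"
      by simp
    also have "\<dots> \<le> \<bar>d\<bar> * (2 * y)"
      using y by (intro mult_left_mono) (auto simp: field_simps)
    also have "\<dots> \<le> y * (2 * (\<bar>d\<bar> + 1))"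
      using y by (simp add: algebra_simps)
    also have "\<dots> \<le> \<epsilon>"
      using y_eps .
    finally show ?thesis .
  qed
  moreover have "\<forall>k\<in>{1..Suc N}. b' k > 0" "exp_sum \<alpha>' b' (Suc N) 0 = x\<^sub>0"
    using assms(1) y by (auto simp: b'_def exp_sum' d_def)
  ultimately show thesis
    by (intro that) (auto simp: err sums_iff)
qed

lemma exp_sum_approx_up_to_tail:
  fixes \<rho> :: "nat \<Rightarrow> real"
  assumes "summable (\<lambda>t. \<bar>\<rho> t\<bar>)" "\<epsilon> > 0"
  shows "\<exists>\<alpha> b. (\<forall>k\<in>{1..N}. b k > 0) \<and> summable (\<lambda>t. \<bar>\<rho> t - exp_sum \<alpha> b N t\<bar>) \<and>
           (\<Sum>t. \<bar>\<rho> t - exp_sum \<alpha> b N t\<bar>) \<le> (\<Sum>t. \<bar>\<rho> (t + N)\<bar>) + \<epsilon>"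
  using assms
proof (induction N arbitrary: \<rho> \<epsilon>)
  case 0
  then show ?case
    by (intro exI[of _ "\<lambda>_. 0"]) (simp add: exp_sum_def)
next
  case (Suc N)
  have "summable (\<lambda>t. \<bar>\<rho> (Suc t)\<bar>)"
    using Suc.prems(1) by (subst summable_Suc_iff)
  then obtain \<alpha> b where b: "\<forall>k\<in>{1..N}. b k > 0"
    and sum_\<psi>: "summable (\<lambda>t. \<bar>\<rho> (Suc t) - exp_sum \<alpha> b N t\<bar>)"
    and le_\<psi>: "(\<Sum>t. \<bar>\<rho> (Suc t) - exp_sum \<alpha> b N t\<bar>) \<le> (\<Sum>t. \<bar>\<rho> (Suc (t + N))\<bar>) + \<epsilon> / 2"
    using Suc.IH[of "\<lambda>t. \<rho> (Suc t)" "\<epsilon> / 2"] Suc.prems(2) by auto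
  have "\<epsilon> / 2 > 0"
    using Suc.prems(2) by simp
  obtain \<alpha>' b' where b': "\<forall>k\<in>{1..Suc N}. b' k > 0"
    and head: "exp_sum \<alpha>' b' (Suc N) 0 = \<rho> 0"
    and sum_d: "summable (\<lambda>t. \<bar>exp_sum \<alpha>' b' (Suc N) (Suc t) - exp_sum \<alpha> b N t\<bar>)"
    and le_d: "(\<Sum>t. \<bar>exp_sum \<alpha>' b' (Suc N) (Suc t) - exp_sum \<alpha> b N t\<bar>) \<le> \<epsilon> / 2"
    by (rule exp_sum_prepend[OF b \<open>\<epsilon> / 2 > 0\<close>, where x\<^sub>0 = "\<rho> 0"])
  define e where "e = (\<lambda>t. \<bar>\<rho> t - exp_sum \<alpha>' b' (Suc N) t\<bar>)"
  define g where "g = (\<lambda>t. \<bar>\<rho> (Suc t) - exp_sum \<alpha> b N t\<bar>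
      + \<bar>exp_sum \<alpha>' b' (Suc N) (Suc t) - exp_sum \<alpha> b N t\<bar>)"
  have e_le: "e (Suc t) \<le> g t" for t
    unfolding e_def g_def by linarith
  have sum_g: "summable g"
    unfolding g_def using sum_\<psi> sum_d by (rule summable_add)
  have sum_e_Suc: "summable (\<lambda>t. e (Suc t))"
    by (rule summable_comparison_test[OF _ sum_g]) (use e_le e_def in auto)
  then have sum_e: "summable e"
    by (subst summable_Suc_iff[symmetric])
  have "suminf e = (\<Sum>t. e (Suc t))"
    using suminf_split_head[OF sum_e] head by (simp add: e_def)
  also have "\<dots> \<le> suminf g"
    by (rule suminf_le[OF e_le sum_e_Suc sum_g])
  also have "\<dots> \<le> (\<Sum>t. \<bar>\<rho> (t + Suc N)\<bar>) + \<epsilon>"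
    using suminf_add[OF sum_\<psi> sum_d] le_\<psi> le_d by (simp add: g_def)
  finally show ?case
    using b' sum_e by (auto simp: e_def)
qed

lemma exp_decay_tail_sum:
  fixes \<rho> :: "nat \<Rightarrow> real"
  assumes "\<beta> > 0" "\<forall>t. \<bar>\<rho> t\<bar> \<le> c * exp (- \<beta> * real t)"
  shows "summable (\<lambda>t. \<bar>\<rho> t\<bar>)"
    and "(\<Sum>t. \<bar>\<rho> (t + m)\<bar>) \<le> c * exp (- \<beta> * real m) / (1 - exp (- \<beta>))"
proof -
  define q where "q = exp (- \<beta>)"
  have q: "0 < q" "q < 1"
    using assms(1) by (auto simp: q_def)
  have \<rho>_le: "\<bar>\<rho> t\<bar> \<le> c * q ^ t" for t
    using assms(2) by (simp add: q_def exp_neg_mult_of_nat)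
  have "(\<lambda>t. c * q ^ m * q ^ t) sums (c * q ^ m * (1 / (1 - q)))"
    using q by (intro sums_mult geometric_sums) simp
  then have geo: "summable (\<lambda>t. c * q ^ (t + m))" "(\<Sum>t. c * q ^ (t + m)) = c * q ^ m / (1 - q)"
    by (simp_all add: sums_iff power_add mult_ac)
  have "summable (\<lambda>t. \<bar>\<rho> (t + m)\<bar>)"
    by (rule summable_comparison_test[OF _ geo(1)]) (use \<rho>_le in auto)
  then show "summable (\<lambda>t. \<bar>\<rho> t\<bar>)"
    by (subst (asm) summable_iff_shift)
  have "(\<Sum>t. \<bar>\<rho> (t + m)\<bar>) \<le> (\<Sum>t. c * q ^ (t + m))"
    by (rule suminf_le[OF _ \<open>summable (\<lambda>t. \<bar>\<rho> (t + m)\<bar>)\<close> geo(1)]) (use \<rho>_le in auto)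
  also have "\<dots> = c * q ^ m / (1 - q)"
    by (rule geo(2))
  finally show "(\<Sum>t. \<bar>\<rho> (t + m)\<bar>) \<le> c * exp (- \<beta> * real m) / (1 - exp (- \<beta>))"
    by (simp add: q_def exp_neg_mult_of_nat)
qed

theorem lemmaF3:
  fixes \<beta> c :: real and n :: nat
  assumes "\<beta> > 0" and "c > 0"
    and "1 \<le> n" and "int n \<le> \<lfloor>99 * \<beta>\<rfloor>"
  shows "\<exists>C::real. \<forall>\<rho>::nat \<Rightarrow> real.
           (\<forall>t. \<bar>\<rho> t\<bar> \<le> c * exp (- \<beta> * real t)) \<longrightarrow>
           (\<forall>m::nat. m \<ge> 1 \<longrightarrow>
              (\<exists>(\<alpha>::nat \<Rightarrow> real) (b::nat \<Rightarrow> real).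
                 (\<forall>k\<in>{1..m}. b k > 0) \<and>
                 summable (\<lambda>t. \<bar>\<rho> t - (\<Sum>k=1..m. \<alpha> k * exp (- b k * real t))\<bar>) \<and>
                 (\<Sum>t. \<bar>\<rho> t - (\<Sum>k=1..m. \<alpha> k * exp (- b k * real t))\<bar>) \<le> C / real m ^ n))"
proof -
  define C where "C = 2 * c / (1 - exp (- \<beta>)) * (fact n / \<beta> ^ n)"
  show ?thesis
  proof (intro exI[of _ C] allI impI)
    fix \<rho> :: "nat \<Rightarrow> real" and m :: nat
    assume decay: "\<forall>t. \<bar>\<rho> t\<bar> \<le> c * exp (- \<beta> * real t)" and "m \<ge> 1"
    define T where "T = c * exp (- \<beta> * real m) / (1 - exp (- \<beta>))"
    have "T > 0"
      using assms(1,2) by (simp add: T_def)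
    obtain \<alpha> b where "\<forall>k\<in>{1..m}. b k > 0" "summable (\<lambda>t. \<bar>\<rho> t - exp_sum \<alpha> b m t\<bar>)"
      and err: "(\<Sum>t. \<bar>\<rho> t - exp_sum \<alpha> b m t\<bar>) \<le> (\<Sum>t. \<bar>\<rho> (t + m)\<bar>) + T"
      using exp_sum_approx_up_to_tail[OF exp_decay_tail_sum(1)[OF assms(1) decay] \<open>T > 0\<close>]
      by blast
    have "2 * T * real m ^ n
        = 2 * c / (1 - exp (- \<beta>)) * (exp (- \<beta> * real m) * real m ^ n)"
      by (simp add: T_def)
    moreover have "\<dots> \<le> C"
      unfolding C_def using assms(1,2) by (intro mult_left_mono exp_neg_mult_power_le) simp_all
    ultimately have "2 * T \<le> C / real m ^ n"
      using \<open>m \<ge> 1\<close> by (simp add: pos_le_divide_eq)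
    then have "(\<Sum>t. \<bar>\<rho> t - exp_sum \<alpha> b m t\<bar>) \<le> C / real m ^ n"
      using err exp_decay_tail_sum(2)[OF assms(1) decay, of m] by (simp add: T_def)
    then show "\<exists>\<alpha> b. (\<forall>k\<in>{1..m}. b k > 0) \<and>
        summable (\<lambda>t. \<bar>\<rho> t - (\<Sum>k=1..m. \<alpha> k * exp (- b k * real t))\<bar>) \<and>
        (\<Sum>t. \<bar>\<rho> t - (\<Sum>k=1..m. \<alpha> k * exp (- b k * real t))\<bar>) \<le> C / real m ^ n"
      using \<open>\<forall>k\<in>{1..m}. b k > 0\<close> \<open>summable (\<lambda>t. \<bar>\<rho> t - exp_sum \<alpha> b m t\<bar>)\<close>
      unfolding exp_sum_def by blast
  qed
qed

end
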